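(* Let $\mathcal{U}\subset\mathbb{R}^m$ be a nonempty closed convex set, let $\xi_1:\mathbb{R}^m\to\mathbb{R}$ be convex and differentiable with $\nabla\xi_1$ Lipschitz continuous with constant $L>0$, and let $\xi_2$ be a proper closed convex function that is strongly convex with constant $\mu>0$. Let $\xi=\xi_1+\xi_2$ and consider $\min_{{\bf u}\in\mathcal{U}}\xi({\bf u})$. Let ${\bf u}^0\in\mathcal{U}\cap\mathrm{dom}(\xi_2)$, ${\bf u}^{-1}={\bf u}^0$, $L_0\in(0,L]$, and for $k\ge1$ generate ${\bf u}^k$ as follows: choose $L_k\in(0,L]$ and $\omega_{k-1}$ with $0\le\omega_{k-1}\le\sqrt{L_{k-1}/L_k}$, set $\hat{\bf u}^{k-1}={\bf u}^{k-1}+\omega_{k-1}({\bf u}^{k-1}-{\bf u}^{k-2})$, and $${\bf u}^k=\arg\min_{{\bf u}\in\mathcal{U}}\ \xi_1(\hat{\bf u}^{k-1})+\langle\nabla\xi_1(\hat{\bf u}^{k-1}),{\bf u}-\hat{\bf u}^{k-1}\rangle+\tfrac{L_k}{2}\|{\bf u}-\hat{\bf u}^{k-1}\|^2+\xi_2({\bf u});$$ if $\xi({\bf u}^k)>\xi({\bf u}^{k-1})$, recompute ${\bf u}^k$ by the same formula with $\hat{\bf u}^{k-1}$ replaced by ${\bf u}^{k-1}$ (i.e. $\omega_{k-1}=0$). Assume that for every $k\ge1$ the final ${\bf u}^k$ and the extrapolated point $\hat{\bf u}^{k-1}$ actually used satisfy $$\xi_1({\bf u}^k)\le\xi_1(\hat{\bf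 u}^{k-1})+\langle\nabla\xi_1(\hat{\bf u}^{k-1}),{\bf u}^k-\hat{\bf u}^{k-1}\rangle+\tfrac{L_k}{2}\|{\bf u}^k-\hat{\bf u}^{k-1}\|^2 .$$ Then $\{{\bf u}^k\}$ converges R-linearly to the unique minimizer ${\bf u}^*$ of $\xi$ over $\mathcal{U}$: there exist constants $C>0$ and $0<\tau<1$ such that $\|{\bf u}^k-{\bf u}^*\|\le C\tau^k$ for all $k\ge0$.
   Context: Strong convexity of $\xi_2$ with constant $\mu>0$ means $\xi_2({\bf u})-\xi_2({\bf v})\ge\langle{\bf g}_{\bf v},{\bf u}-{\bf v}\rangle+\frac{\mu}{2}\|{\bf u}-{\bf v}\|^2$ for all ${\bf g}_{\bf v}\in\partial\xi_2({\bf v})$ and ${\bf u},{\bf v}\in\mathrm{dom}(\xi_2)$. *)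

theory Defs
  imports "HOL-Analysis.Analysis"
begin

definition edom :: "('a \<Rightarrow> ereal) \<Rightarrow> 'a set" where
  "edom f = {x. f x < \<infinity>}"

definition epigraph :: "('a \<Rightarrow> ereal) \<Rightarrow> ('a \<times> real) set" where
  "epigraph f = {(x, t). f x \<le> ereal t}"

definition proper_fun :: "('a \<Rightarrow> ereal) \<Rightarrow> bool" where
  "proper_fun f \<longleftrightarrow> (\<forall>x. f x \<noteq> -\<infinity>) \<and> edom f \<noteq> {}"

definition closed_fun :: "('a::topological_space \<Rightarrow> ereal) \<Rightarrow> bool" where
  "closed_fun f \<longleftrightarrow> closed (epigraph f)"

definition convex_fun :: "('a::real_vector \<Rightarrow> ereal) \<Rightarrow> bool" where
  "convex_fun f \<longleftrightarrow> convex (epigraph f)"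

definition subdiff :: "('a::real_inner \<Rightarrow> ereal) \<Rightarrow> 'a \<Rightarrow> 'a set" where
  "subdiff f v = {g. \<forall>u. f v + ereal (g \<bullet> (u - v)) \<le> f u}"

definition strongly_convex_sg :: "('a::real_inner \<Rightarrow> ereal) \<Rightarrow> real \<Rightarrow> bool" where
  "strongly_convex_sg f \<mu> \<longleftrightarrow>
     (\<forall>u\<in>edom f. \<forall>v\<in>edom f. \<forall>g\<in>subdiff f v.
        real_of_ereal (f u) - real_of_ereal (f v) \<ge> g \<bullet> (u - v) + \<mu> / 2 * (norm (u - v))\<^sup>2)"

definition prox_model ::
  "('a::real_inner \<Rightarrow> real) \<Rightarrow> ('a \<Rightarrow> 'a) \<Rightarrow> ('a \<Rightarrow> ereal) \<Rightarrow> real \<Rightarrow> 'a \<Rightarrow> 'a \<Rightarrow> ereal" where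
  "prox_model f1 G f2 Lk y x =
     ereal (f1 y + G y \<bullet> (x - y) + Lk / 2 * (norm (x - y))\<^sup>2) + f2 x"

definition is_argmin_on :: "'a set \<Rightarrow> ('a \<Rightarrow> ereal) \<Rightarrow> 'a \<Rightarrow> bool" where
  "is_argmin_on U F x \<longleftrightarrow> x \<in> U \<and> (\<forall>z\<in>U. F x \<le> F z)"

end

theory Submission
  imports Defs
begin

text \<open>Write F = \<xi>1 + \<xi>2 on the domain of \<xi>2. A proximal gradient step from y with weight
  L_k whose result z satisfies the descent condition obeys, for every feasible x,
    F z + (L_k + \<mu>)/2 |x - z|^2 <= F x + L_k/2 |x - y|^2,
  because its model is (L_k + \<mu>)-strongly convex. The bound on \<omega> (or a restart) gives
  L_k |uh_k - u_(k-1)|^2 <= L_(k-1) |u_(k-1) - u_(k-2)|^2, so x = u_(k-1) shows that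
  \<Psi>_k = F u_k - F u* + L_k/2 |u_k - u_(k-1)|^2 drops by at least \<mu>/2 |u_k - u_(k-1)|^2.
  With x = u* and Young's inequality, \<Psi>_k is bounded by a multiple of the last two squared
  steps, hence of \<Psi>_(k-2) - \<Psi>_k; so \<Psi> contracts by a fixed factor every two steps, and
  quadratic growth \<mu>/2 |u - u*|^2 <= F u - F u* gives R-linear convergence.
  Strong convexity is assumed in subgradient form; it implies the usual inequality for function
  values because points carrying a subgradient (proximal points) are dense in the domain.\<close>

lemma tendsto_at_right_0_le:
  fixes f :: "real \<Rightarrow> real"
  assumes "(f \<longlongrightarrow> A) (at_right 0)" and "\<And>s. 0 < s \<Longrightarrow> s \<le> 1 \<Longrightarrow> f s \<le> X"
  shows "A \<le> X"
proof (rule tendsto_upperbound[OF assms(1)])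
  show "\<forall>\<^sub>F s in at_right 0. f s \<le> X"
    by (rule eventually_mono[OF eventually_at_right_real[of 0 1]]) (use assms(2) in auto)
qed simp

lemma quadratic_le_linear_sq_bound:
  fixes c M n r :: real
  assumes c: "c > 0" and le: "c/2 * r\<^sup>2 \<le> M + n * r"
  shows "r\<^sup>2 \<le> 4*M/c + 4*n\<^sup>2/c\<^sup>2"
proof -
  have "0 \<le> (c*r/2 - n)\<^sup>2" by simp
  hence "c * (n * r) \<le> c\<^sup>2/4 * r\<^sup>2 + n\<^sup>2" by (simp add: power2_eq_square algebra_simps)
  hence "n * r \<le> c/4 * r\<^sup>2 + n\<^sup>2/c" using c by (simp add: field_simps power2_eq_square)
  with le have "c/4 * r\<^sup>2 \<le> M + n\<^sup>2/c" by linarith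
  hence "c * r\<^sup>2 \<le> 4*M + 4*n\<^sup>2/c" by (simp add: field_simps)
  thus ?thesis using c by (simp add: field_simps power2_eq_square)
qed

lemma norm_add_sq:
  fixes a b :: "'a::real_inner"
  shows "(norm (a + b))\<^sup>2 = (norm a)\<^sup>2 + 2 * (a \<bullet> b) + (norm b)\<^sup>2"
  by (simp add: power2_norm_eq_inner inner_simps inner_commute)

lemma norm_convex_combination_sq:
  fixes a b :: "'a::real_inner"
  shows "(norm ((1 - t) *\<^sub>R a + t *\<^sub>R b))\<^sup>2 = (1 - t) * (norm a)\<^sup>2 + t * (norm b)\<^sup>2 - t * (1 - t) * (norm (a - b))\<^sup>2"
  by (simp add: power2_norm_eq_inner inner_simps inner_commute algebra_simps)

lemma norm_diff_sq_le:
  fixes a b :: "'a::real_normed_vector"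
  shows "(norm (a - b))\<^sup>2 \<le> 2 * (norm a)\<^sup>2 + 2 * (norm b)\<^sup>2"
proof -
  have "(norm (a - b))\<^sup>2 \<le> (norm a + norm b)\<^sup>2"
    using norm_triangle_ineq4[of a b] by (simp add: power_mono)
  also have "\<dots> \<le> 2 * (norm a)\<^sup>2 + 2 * (norm b)\<^sup>2"
    using zero_le_power2[of "norm a - norm b"] by (simp add: power2_eq_square algebra_simps)
  finally show ?thesis .
qed

lemma inner_le_Young:
  fixes a b :: "'a::real_inner"
  assumes "\<mu> > 0"
  shows "a \<bullet> b \<le> \<mu>/2 * (norm a)\<^sup>2 + 1/(2*\<mu>) * (norm b)\<^sup>2"
proof -
  have "a \<bullet> b \<le> norm a * norm b" by (rule norm_cauchy_schwarz)
  moreover have "2*\<mu> * (norm a * norm b) \<le> \<mu>\<^sup>2 * (norm a)\<^sup>2 + (norm b)\<^sup>2"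
    using zero_le_power2[of "\<mu> * norm a - norm b"] by (simp add: power2_eq_square algebra_simps)
  hence "norm a * norm b \<le> \<mu>/2 * (norm a)\<^sup>2 + 1/(2*\<mu>) * (norm b)\<^sup>2"
    using assms by (simp add: field_simps power2_eq_square)
  ultimately show ?thesis by linarith
qed

lemma convex_on_gradient_inequality:
  fixes f :: "'a::real_inner \<Rightarrow> real"
  assumes cv: "convex_on UNIV f" and d: "\<And>x. (f has_derivative (\<lambda>h. G x \<bullet> h)) (at x)"
  shows "f y + G y \<bullet> (x - y) \<le> f x"
proof -
  define \<phi> where "\<phi> = (\<lambda>s::real. f (y + s *\<^sub>R (x - y)))"
  have "((\<lambda>s::real. y + s *\<^sub>R (x - y)) has_derivative (\<lambda>s. s *\<^sub>R (x - y))) (at 0)"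
    by (auto intro!: derivative_eq_intros)
  from has_derivative_compose[OF this d[of "y + 0 *\<^sub>R (x - y)"]]
  have "(\<phi> has_derivative (\<lambda>s. s * (G y \<bullet> (x - y)))) (at 0)" by (simp add: \<phi>_def)
  moreover have "(\<lambda>s. s * (G y \<bullet> (x - y))) = (*) (G y \<bullet> (x - y))" by (auto simp: mult.commute)
  ultimately have "(\<phi> has_field_derivative G y \<bullet> (x - y)) (at 0)"
    by (simp add: has_field_derivative_def)
  moreover have "convex_on UNIV \<phi>"
  proof (rule convex_onI)
    fix t a b :: real assume "0 < t" "t < 1"
    moreover have "y + ((1 - t) *\<^sub>R a + t *\<^sub>R b) *\<^sub>R (x - y)
        = (1 - t) *\<^sub>R (y + a *\<^sub>R (x - y)) + t *\<^sub>R (y + b *\<^sub>R (x - y))"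
      by (simp add: algebra_simps)
    ultimately show "\<phi> ((1 - t) *\<^sub>R a + t *\<^sub>R b) \<le> (1 - t) * \<phi> a + t * \<phi> b"
      unfolding \<phi>_def using convex_onD[OF cv, of t] by simp
  qed simp
  ultimately have "\<phi> 1 - \<phi> 0 \<ge> G y \<bullet> (x - y) * (1 - 0)"
    by (intro convex_on_imp_above_tangent) auto
  thus ?thesis by (simp add: \<phi>_def)
qed

section \<open>Strong convexity\<close>

definition strongly_convex_on :: "'a::real_normed_vector set \<Rightarrow> real \<Rightarrow> ('a \<Rightarrow> real) \<Rightarrow> bool" where
  "strongly_convex_on S \<kappa> \<phi> \<longleftrightarrow> convex S \<and> (\<forall>x\<in>S. \<forall>y\<in>S. \<forall>t. 0 \<le> t \<and> t \<le> 1 \<longrightarrow>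
     \<phi> ((1 - t) *\<^sub>R x + t *\<^sub>R y) \<le> (1 - t) * \<phi> x + t * \<phi> y - \<kappa>/2 * t * (1 - t) * (norm (x - y))\<^sup>2)"

lemma strongly_convex_onD:
  assumes "strongly_convex_on S \<kappa> \<phi>" "x \<in> S" "y \<in> S" "0 \<le> t" "t \<le> 1"
  shows "\<phi> ((1 - t) *\<^sub>R x + t *\<^sub>R y) \<le> (1 - t) * \<phi> x + t * \<phi> y - \<kappa>/2 * t * (1 - t) * (norm (x - y))\<^sup>2"
  using assms by (auto simp: strongly_convex_on_def)

lemma convex_on_imp_strongly_convex_on_0:
  assumes "convex S" and "convex_on S \<phi>"
  shows "strongly_convex_on S 0 \<phi>"
  unfolding strongly_convex_on_def
proof (intro conjI assms ballI allI impI)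
  fix x y and t :: real assume "x \<in> S" "y \<in> S" "0 \<le> t \<and> t \<le> 1"
  thus "\<phi> ((1 - t) *\<^sub>R x + t *\<^sub>R y) \<le> (1 - t) * \<phi> x + t * \<phi> y - 0/2 * t * (1 - t) * (norm (x - y))\<^sup>2"
    using convex_onD[OF assms(2), of t x y] by simp
qed

lemma strongly_convex_on_add:
  assumes "strongly_convex_on S \<kappa> \<phi>" "strongly_convex_on S \<kappa>' \<psi>"
  shows "strongly_convex_on S (\<kappa> + \<kappa>') (\<lambda>x. \<phi> x + \<psi> x)"
  unfolding strongly_convex_on_def
proof (intro conjI ballI allI impI)
  show "convex S" using assms(1) by (simp add: strongly_convex_on_def)
  fix x y and t :: real assume "x \<in> S" "y \<in> S" "0 \<le> t \<and> t \<le> 1"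
  hence "\<phi> ((1 - t) *\<^sub>R x + t *\<^sub>R y) \<le> (1 - t) * \<phi> x + t * \<phi> y - \<kappa>/2 * t * (1 - t) * (norm (x - y))\<^sup>2"
    "\<psi> ((1 - t) *\<^sub>R x + t *\<^sub>R y) \<le> (1 - t) * \<psi> x + t * \<psi> y - \<kappa>'/2 * t * (1 - t) * (norm (x - y))\<^sup>2"
    using strongly_convex_onD[OF assms(1)] strongly_convex_onD[OF assms(2)] by auto
  moreover have "(\<kappa> + \<kappa>')/2 * t * (1 - t) * (norm (x - y))\<^sup>2
      = \<kappa>/2 * t * (1 - t) * (norm (x - y))\<^sup>2 + \<kappa>'/2 * t * (1 - t) * (norm (x - y))\<^sup>2"
    by (simp add: algebra_simps add_divide_distrib)
  ultimately show "\<phi> ((1 - t) *\<^sub>R x + t *\<^sub>R y) + \<psi> ((1 - t) *\<^sub>R x + t *\<^sub>R y)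
      \<le> (1 - t) * (\<phi> x + \<psi> x) + t * (\<phi> y + \<psi> y) - (\<kappa> + \<kappa>')/2 * t * (1 - t) * (norm (x - y))\<^sup>2"
    by (simp only: distrib_left)
qed

lemma strongly_convex_on_prox_quadratic:
  fixes y g :: "'a::real_inner"
  assumes "convex S"
  shows "strongly_convex_on S L (\<lambda>x. c + g \<bullet> (x - y) + L/2 * (norm (x - y))\<^sup>2)"
  unfolding strongly_convex_on_def
proof (intro conjI assms ballI allI impI)
  fix x z and t :: real
  have eq: "(1 - t) *\<^sub>R x + t *\<^sub>R z - y = (1 - t) *\<^sub>R (x - y) + t *\<^sub>R (z - y)"
    by (simp add: algebra_simps)
  have norm_eq: "(norm ((1 - t) *\<^sub>R x + t *\<^sub>R z - y))\<^sup>2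
      = (1 - t) * (norm (x - y))\<^sup>2 + t * (norm (z - y))\<^sup>2 - t * (1 - t) * (norm (x - z))\<^sup>2"
    unfolding eq norm_convex_combination_sq by simp
  have inner_eq: "g \<bullet> ((1 - t) *\<^sub>R x + t *\<^sub>R z - y) = (1 - t) * (g \<bullet> (x - y)) + t * (g \<bullet> (z - y))"
    unfolding eq by (simp add: inner_simps)
  show "c + g \<bullet> ((1 - t) *\<^sub>R x + t *\<^sub>R z - y) + L/2 * (norm ((1 - t) *\<^sub>R x + t *\<^sub>R z - y))\<^sup>2
      \<le> (1 - t) * (c + g \<bullet> (x - y) + L/2 * (norm (x - y))\<^sup>2) + t * (c + g \<bullet> (z - y) + L/2 * (norm (z - y))\<^sup>2)
         - L/2 * t * (1 - t) * (norm (x - z))\<^sup>2"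
    unfolding norm_eq inner_eq by (simp add: field_simps)
qed

lemma strongly_convex_on_min_growth:
  assumes sc: "strongly_convex_on S \<kappa> \<phi>" and z: "z \<in> S" and z_min: "\<And>x. x \<in> S \<Longrightarrow> \<phi> z \<le> \<phi> x"
    and x: "x \<in> S"
  shows "\<kappa>/2 * (norm (x - z))\<^sup>2 \<le> \<phi> x - \<phi> z"
proof (rule tendsto_at_right_0_le)
  show "((\<lambda>s. \<kappa>/2 * (norm (x - z))\<^sup>2 * (1 - s)) \<longlongrightarrow> \<kappa>/2 * (norm (x - z))\<^sup>2) (at_right 0)"
    by (auto intro!: tendsto_eq_intros)
  fix s :: real assume s: "0 < s" "s \<le> 1"
  have "(1 - s) *\<^sub>R z + s *\<^sub>R x \<in> S"
    using sc z x s by (simp add: strongly_convex_on_def convex_alt)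
  hence "\<phi> z \<le> \<phi> ((1 - s) *\<^sub>R z + s *\<^sub>R x)" by (rule z_min)
  also have "\<dots> \<le> (1 - s) * \<phi> z + s * \<phi> x - \<kappa>/2 * s * (1 - s) * (norm (z - x))\<^sup>2"
    using strongly_convex_onD[OF sc z x] s by simp
  finally have "s * (\<kappa>/2 * (norm (x - z))\<^sup>2 * (1 - s)) \<le> s * (\<phi> x - \<phi> z)"
    by (simp add: algebra_simps norm_minus_commute)
  thus "\<kappa>/2 * (norm (x - z))\<^sup>2 * (1 - s) \<le> \<phi> x - \<phi> z" using s by simp
qed

lemma strongly_convex_on_quadratic_minorant:
  assumes sc: "strongly_convex_on S \<kappa> \<phi>" and q: "q \<in> S" and aff: "\<And>x. x \<in> S \<Longrightarrow> b + a \<bullet> x \<le> \<phi> x"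
    and x: "x \<in> S"
  shows "\<kappa>/4 * (norm (x - q))\<^sup>2 + a \<bullet> x + (2 * b + a \<bullet> q - \<phi> q) \<le> \<phi> x"
proof -
  define m where "m = (1/2) *\<^sub>R x + (1/2) *\<^sub>R q"
  have "m \<in> S"
    using sc x q convexD[of S x q "1/2" "1/2"] by (simp add: m_def strongly_convex_on_def)
  from aff[OF this] have "b + (a \<bullet> x + a \<bullet> q) / 2 \<le> \<phi> m"
    by (simp add: m_def inner_simps add_divide_distrib)
  moreover have "\<phi> m \<le> (\<phi> x + \<phi> q) / 2 - \<kappa>/8 * (norm (x - q))\<^sup>2"
    using strongly_convex_onD[OF sc x q, of "1/2"] by (simp add: m_def algebra_simps)
  ultimately show ?thesis by (simp add: field_simps)
qed

section \<open>Closed proper convex functions with values in (-inf, +inf]\<close>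

lemma edom_ereal_real:
  assumes "f x \<noteq> -\<infinity>" and "x \<in> edom f"
  shows "f x = ereal (real_of_ereal (f x))"
  using assms by (cases "f x") (auto simp: edom_def)

lemma notin_edom_iff: "x \<notin> edom f \<longleftrightarrow> f x = \<infinity>"
  by (simp add: edom_def)

lemma epigraph_real_eq:
  assumes "\<And>x. f x \<noteq> -\<infinity>"
  shows "epigraph f = {(x, t). x \<in> edom f \<and> real_of_ereal (f x) \<le> t}"
proof -
  have "f x \<le> ereal t \<longleftrightarrow> x \<in> edom f \<and> real_of_ereal (f x) \<le> t" for x t
    using assms[of x] by (cases "f x") (auto simp: edom_def)
  thus ?thesis by (auto simp: epigraph_def)
qed

lemma is_argmin_on_ereal_add_iff:
  fixes f :: "'a \<Rightarrow> ereal" and h :: "'a \<Rightarrow> real"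
  assumes nm: "\<And>x. f x \<noteq> -\<infinity>" and ne: "U \<inter> edom f \<noteq> {}"
  shows "is_argmin_on U (\<lambda>x. ereal (h x) + f x) z \<longleftrightarrow>
    z \<in> U \<inter> edom f \<and> (\<forall>x\<in>U \<inter> edom f. h z + real_of_ereal (f z) \<le> h x + real_of_ereal (f x))"
proof -
  have fin: "ereal (h x) + f x = ereal (h x + real_of_ereal (f x))" if "x \<in> edom f" for x
    using edom_ereal_real[OF nm that] by (metis plus_ereal.simps(1))
  have inf: "ereal (h x) + f x = \<infinity>" if "x \<notin> edom f" for x
    using that by (simp add: notin_edom_iff)
  obtain x0 where x0: "x0 \<in> U \<inter> edom f" using ne by blast
  show ?thesis
  proof
    assume z: "is_argmin_on U (\<lambda>x. ereal (h x) + f x) z"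
    have z_edom: "z \<in> edom f"
      using z x0 fin[of x0] inf[of z] unfolding is_argmin_on_def by force
    have "h z + real_of_ereal (f z) \<le> h x + real_of_ereal (f x)" if "x \<in> U \<inter> edom f" for x
      using z that fin[OF z_edom] fin[of x] unfolding is_argmin_on_def by force
    with z z_edom show "z \<in> U \<inter> edom f \<and> (\<forall>x\<in>U \<inter> edom f. h z + real_of_ereal (f z) \<le> h x + real_of_ereal (f x))"
      unfolding is_argmin_on_def by blast
  next
    assume "z \<in> U \<inter> edom f \<and> (\<forall>x\<in>U \<inter> edom f. h z + real_of_ereal (f z) \<le> h x + real_of_ereal (f x))"
    thus "is_argmin_on U (\<lambda>x. ereal (h x) + f x) z"
      unfolding is_argmin_on_def using fin inf by (metis IntD1 IntD2 IntI ereal_less_eq(1,3))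
  qed
qed

lemma convex_fun_combination:
  assumes nm: "\<And>x. f x \<noteq> -\<infinity>" and cf: "convex_fun f"
    and x: "x \<in> edom f" and y: "y \<in> edom f" and t: "0 \<le> t" "t \<le> 1"
  shows "(1 - t) *\<^sub>R x + t *\<^sub>R y \<in> edom f \<and>
     real_of_ereal (f ((1 - t) *\<^sub>R x + t *\<^sub>R y)) \<le> (1 - t) * real_of_ereal (f x) + t * real_of_ereal (f y)"
proof -
  note E = epigraph_real_eq[OF nm]
  have "(x, real_of_ereal (f x)) \<in> epigraph f" "(y, real_of_ereal (f y)) \<in> epigraph f"
    using x y by (auto simp: E)
  from convexD[OF cf[unfolded convex_fun_def] this, of "1 - t" t] t
  show ?thesis by (simp add: E)
qed

text \<open>Separate a point lying below the epigraph from it; the hyperplane is not vertical since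
  it also separates that point from the epigraph point directly above it.\<close>
lemma closed_convex_fun_affine_minorant:
  fixes f :: "'a::euclidean_space \<Rightarrow> ereal"
  assumes pf: "proper_fun f" and cl: "closed_fun f" and cf: "convex_fun f"
  obtains a b where "\<And>x. x \<in> edom f \<Longrightarrow> b + a \<bullet> x \<le> real_of_ereal (f x)"
proof -
  have nm: "\<And>x. f x \<noteq> -\<infinity>" using pf by (simp add: proper_fun_def)
  note E = epigraph_real_eq[OF nm]
  obtain x0 where x0: "x0 \<in> edom f" using pf by (auto simp: proper_fun_def)
  have "(x0, real_of_ereal (f x0) - 1) \<notin> epigraph f" by (simp add: E)
  then obtain A \<beta> where A: "A \<bullet> (x0, real_of_ereal (f x0) - 1) < \<beta>"
      and B: "\<forall>w\<in>epigraph f. A \<bullet> w > \<beta>"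
    using separating_hyperplane_closed_point[OF cf[unfolded convex_fun_def] cl[unfolded closed_fun_def]]
    by blast
  obtain a s where As: "A = (a, s)" by (cases A)
  have "(x0, real_of_ereal (f x0)) \<in> epigraph f" using x0 by (simp add: E)
  with A B As have "s > 0" by (force simp: algebra_simps)
  show thesis
  proof (rule that)
    fix x assume "x \<in> edom f"
    hence "(x, real_of_ereal (f x)) \<in> epigraph f" by (simp add: E)
    with B As have "\<beta> < a \<bullet> x + s * real_of_ereal (f x)" by force
    thus "\<beta> / s + (- a /\<^sub>R s) \<bullet> x \<le> real_of_ereal (f x)"
      using \<open>s > 0\<close> by (simp add: field_simps inner_simps)
  qed
qed

lemma quadratic_minorant_norm_bound:
  fixes a q x :: "'a::real_inner"
  assumes \<kappa>: "\<kappa> > 0" and le: "\<kappa>/2 * (norm (x - q))\<^sup>2 + a \<bullet> x + b \<le> K"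
  shows "norm x \<le> sqrt (4*(K - b + norm a * norm q)/\<kappa> + 4*(norm a)\<^sup>2/\<kappa>\<^sup>2) + norm q"
proof -
  have "- (a \<bullet> x) \<le> norm a * norm x" using norm_cauchy_schwarz[of "-a" x] by simp
  also have "\<dots> \<le> norm a * (norm (x - q) + norm q)"
    using norm_triangle_sub[of x q] by (intro mult_left_mono) (auto simp: add.commute)
  finally have "\<kappa>/2 * (norm (x - q))\<^sup>2 \<le> (K - b + norm a * norm q) + norm a * norm (x - q)"
    using le by (simp add: algebra_simps)
  hence "(norm (x - q))\<^sup>2 \<le> 4*(K - b + norm a * norm q)/\<kappa> + 4*(norm a)\<^sup>2/\<kappa>\<^sup>2"
    by (rule quadratic_le_linear_sq_bound[OF \<kappa>])
  hence "norm (x - q) \<le> sqrt (4*(K - b + norm a * norm q)/\<kappa> + 4*(norm a)\<^sup>2/\<kappa>\<^sup>2)"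
    by (simp add: real_le_rsqrt)
  thus ?thesis using norm_triangle_sub[of x q] by (simp add: add.commute)
qed

text \<open>The sublevel set, lifted into the closed epigraph, is compact.\<close>
lemma closed_fun_quadratic_growth_min_exists:
  fixes f :: "'a::euclidean_space \<Rightarrow> ereal" and h :: "'a \<Rightarrow> real"
  assumes nm: "\<And>x. f x \<noteq> -\<infinity>" and cl: "closed_fun f" and S: "closed S"
    and h: "\<And>x. isCont h x" and x0: "x0 \<in> S \<inter> edom f" and \<kappa>: "\<kappa> > 0"
    and growth: "\<And>x. x \<in> edom f \<Longrightarrow> \<kappa>/2 * (norm (x - q))\<^sup>2 + a \<bullet> x + b \<le> h x + real_of_ereal (f x)"
  shows "\<exists>z\<in>S \<inter> edom f. \<forall>x\<in>S \<inter> edom f. h z + real_of_ereal (f z) \<le> h x + real_of_ereal (f x)"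
proof -
  define \<phi> where "\<phi> x = h x + real_of_ereal (f x)" for x
  define K where "K = \<phi> x0"
  define R where "R = sqrt (4*(K - b + norm a * norm q)/\<kappa> + 4*(norm a)\<^sup>2/\<kappa>\<^sup>2) + norm q"
  have norm_le_R: "norm x \<le> R" if x: "x \<in> edom f" "\<phi> x \<le> K" for x
    unfolding R_def
    by (rule quadratic_minorant_norm_bound[OF \<kappa> order_trans[OF growth[OF x(1)] x(2)[unfolded \<phi>_def]]])
  have lower_bound: "b - norm a * R \<le> \<phi> x" if x: "x \<in> edom f" "norm x \<le> R" for x
  proof -
    have "- (a \<bullet> x) \<le> norm a * R"
      using norm_cauchy_schwarz[of "-a" x] mult_left_mono[OF x(2), of "norm a"] by simp
    moreover have "0 \<le> \<kappa>/2 * (norm (x - q))\<^sup>2" using \<kappa> by simp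
    ultimately show ?thesis using growth[OF x(1)] unfolding \<phi>_def by linarith
  qed
  define Ks where "Ks = (\<lambda>p. (fst p, snd p - h (fst p))) -` epigraph f \<inter> (S \<times> UNIV) \<inter> {p. snd p \<le> K}"
  have Ks_iff: "p \<in> Ks \<longleftrightarrow> fst p \<in> S \<and> fst p \<in> edom f \<and> \<phi> (fst p) \<le> snd p \<and> snd p \<le> K" for p
    by (cases p) (auto simp: Ks_def epigraph_real_eq[OF nm] \<phi>_def)
  have "closed Ks" unfolding Ks_def
  proof (intro closed_Int closed_Times S closed_UNIV)
    show "closed ((\<lambda>p. (fst p, snd p - h (fst p))) -` epigraph f)"
      by (intro continuous_closed_vimage cl[unfolded closed_fun_def] continuous_intros
            continuous_at_compose[OF _ h, unfolded o_def])
  qed (intro closed_Collect_le continuous_intros)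
  moreover have "Ks \<subseteq> cball 0 R \<times> {b - norm a * R .. K}"
    using norm_le_R lower_bound by (force simp: Ks_iff)
  hence "bounded Ks" by (rule bounded_subset[rotated]) (intro bounded_Times bounded_cball bounded_closed_interval)
  ultimately have "compact Ks" by (simp add: compact_eq_bounded_closed)
  moreover have x0K: "(x0, K) \<in> Ks" using x0 by (simp add: Ks_iff K_def)
  ultimately obtain p where p: "p \<in> Ks" and p_min: "\<And>w. w \<in> Ks \<Longrightarrow> snd p \<le> snd w"
    using continuous_attains_inf[of Ks snd] continuous_on_snd[OF continuous_on_id] by blast
  show ?thesis
  proof (intro bexI ballI)
    show "fst p \<in> S \<inter> edom f" using p by (simp add: Ks_iff)
    fix x assume x: "x \<in> S \<inter> edom f"
    have "\<phi> (fst p) \<le> snd p" using p by (simp add: Ks_iff)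
    also have "snd p \<le> \<phi> x"
      using p_min[of "(x, \<phi> x)"] p_min[OF x0K] x by (cases "\<phi> x \<le> K") (auto simp: Ks_iff)
    finally show "h (fst p) + real_of_ereal (f (fst p)) \<le> h x + real_of_ereal (f x)" by (simp add: \<phi>_def)
  qed
qed

lemma prox_point_subgradient:
  fixes f :: "'a::real_inner \<Rightarrow> ereal"
  assumes nm: "\<And>x. f x \<noteq> -\<infinity>" and cf: "convex_fun f" and z: "z \<in> edom f"
    and z_min: "\<And>x. x \<in> edom f \<Longrightarrow>
      real_of_ereal (f z) + c/2 * (norm (z - p))\<^sup>2 \<le> real_of_ereal (f x) + c/2 * (norm (x - p))\<^sup>2"
  shows "c *\<^sub>R (p - z) \<in> subdiff f z"
  unfolding subdiff_def
proof (intro CollectI allI)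
  define f' where "f' x = real_of_ereal (f x)" for x
  fix x
  show "f z + ereal (c *\<^sub>R (p - z) \<bullet> (x - z)) \<le> f x"
  proof (cases "x \<in> edom f")
    case False
    thus ?thesis by (simp add: notin_edom_iff)
  next
    case x: True
    have "f' z + c *\<^sub>R (p - z) \<bullet> (x - z) \<le> f' x"
    proof (rule tendsto_at_right_0_le)
      show "((\<lambda>s. f' z + c *\<^sub>R (p - z) \<bullet> (x - z) - s * (c/2 * (norm (x - z))\<^sup>2))
              \<longlongrightarrow> f' z + c *\<^sub>R (p - z) \<bullet> (x - z)) (at_right 0)"
        by (auto intro!: tendsto_eq_intros)
      fix s :: real assume s: "0 < s" "s \<le> 1"
      define zs where "zs = (1 - s) *\<^sub>R z + s *\<^sub>R x"
      have zs: "zs \<in> edom f" "f' zs \<le> (1 - s) * f' z + s * f' x"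
        using convex_fun_combination[OF nm cf z x, of s] s unfolding zs_def f'_def by auto
      have zs_p: "zs - p = (z - p) + s *\<^sub>R (x - z)" unfolding zs_def by (simp add: algebra_simps)
      have norm_zs: "(norm (zs - p))\<^sup>2 = (norm (z - p))\<^sup>2 + 2 * s * ((z - p) \<bullet> (x - z)) + s\<^sup>2 * (norm (x - z))\<^sup>2"
        unfolding zs_p norm_add_sq by (simp add: power_mult_distrib)
      have "f' z + c/2 * (norm (z - p))\<^sup>2 \<le> f' zs + c/2 * (norm (zs - p))\<^sup>2"
        using z_min[OF zs(1)] by (simp add: f'_def)
      also have "\<dots> \<le> (1 - s) * f' z + s * f' x
          + c/2 * ((norm (z - p))\<^sup>2 + 2 * s * ((z - p) \<bullet> (x - z)) + s\<^sup>2 * (norm (x - z))\<^sup>2)"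
        using zs(2) norm_zs by simp
      finally have "s * (f' z + c * ((p - z) \<bullet> (x - z)) - s * (c/2 * (norm (x - z))\<^sup>2)) \<le> s * f' x"
        by (simp add: algebra_simps inner_diff_left inner_diff_right power2_eq_square)
      thus "f' z + c *\<^sub>R (p - z) \<bullet> (x - z) - s * (c/2 * (norm (x - z))\<^sup>2) \<le> f' x"
        using s by simp
    qed
    moreover have "f z = ereal (f' z)" "f x = ereal (f' x)"
      using edom_ereal_real[OF nm z] edom_ereal_real[OF nm x] by (simp_all add: f'_def)
    ultimately show ?thesis by simp
  qed
qed

lemma prox_point_dist_sq_le:
  fixes \<phi> :: "'a::real_inner \<Rightarrow> real"
  assumes aff: "\<And>x. x \<in> D \<Longrightarrow> b + a \<bullet> x \<le> \<phi> x" and z: "z \<in> D" and c: "c \<ge> 1"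
    and z_le: "c/2 * (norm (z - p))\<^sup>2 + \<phi> z \<le> \<phi> p"
  shows "(norm (z - p))\<^sup>2 \<le> (4 * \<bar>\<phi> p - b - a \<bullet> p\<bar> + 4 * (norm a)\<^sup>2) / c"
proof -
  have "c/2 * (norm (z - p))\<^sup>2 \<le> (\<phi> p - b - a \<bullet> p) + a \<bullet> (p - z)"
    using z_le aff[OF z] by (simp add: inner_diff_right)
  also have "\<dots> \<le> \<bar>\<phi> p - b - a \<bullet> p\<bar> + norm a * norm (z - p)"
    using norm_cauchy_schwarz[of a "p - z"] by (simp add: norm_minus_commute)
  finally have "(norm (z - p))\<^sup>2 \<le> 4 * \<bar>\<phi> p - b - a \<bullet> p\<bar> / c + 4 * (norm a)\<^sup>2 / c\<^sup>2"
    using c by (intro quadratic_le_linear_sq_bound) auto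
  also have "4 * (norm a)\<^sup>2 / c\<^sup>2 \<le> 4 * (norm a)\<^sup>2 / c"
    using c by (intro divide_left_mono) (auto simp: power2_eq_square)
  finally show ?thesis by (simp add: add_divide_distrib)
qed

text \<open>Proximal points of \<open>p\<close> carry a subgradient by the previous lemma, and they approach
  \<open>p\<close> as the proximal weight grows.\<close>
lemma subgradient_points_dense:
  fixes f :: "'a::euclidean_space \<Rightarrow> ereal"
  assumes pf: "proper_fun f" and cl: "closed_fun f" and cf: "convex_fun f"
    and p: "p \<in> edom f" and e: "e > 0"
  obtains z g where "z \<in> edom f" "dist z p < e" "g \<in> subdiff f z" "g \<bullet> (p - z) \<ge> 0"
proof -
  have nm: "\<And>x. f x \<noteq> -\<infinity>" using pf by (simp add: proper_fun_def)
  define f' where "f' x = real_of_ereal (f x)" for x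
  obtain a b where ab: "\<And>x. x \<in> edom f \<Longrightarrow> b + a \<bullet> x \<le> f' x"
    using closed_convex_fun_affine_minorant[OF pf cl cf] unfolding f'_def by blast
  define M where "M = f' p - b - a \<bullet> p"
  define c where "c = max 1 ((4 * \<bar>M\<bar> + 4 * (norm a)\<^sup>2 + 1) / e\<^sup>2)"
  have c: "c \<ge> 1" by (simp add: c_def)
  have "\<exists>z\<in>UNIV \<inter> edom f. \<forall>x\<in>UNIV \<inter> edom f.
      c/2 * (norm (z - p))\<^sup>2 + f' z \<le> c/2 * (norm (x - p))\<^sup>2 + f' x"
    unfolding f'_def
  proof (rule closed_fun_quadratic_growth_min_exists[OF nm cl closed_UNIV])
    show "c/2 * (norm (x - p))\<^sup>2 + a \<bullet> x + b \<le> c/2 * (norm (x - p))\<^sup>2 + real_of_ereal (f x)"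
      if "x \<in> edom f" for x
      using ab[OF that] by (simp add: f'_def)
  qed (use p c in \<open>auto intro!: continuous_intros\<close>)
  then obtain z where z: "z \<in> edom f"
    and z_min: "\<And>x. x \<in> edom f \<Longrightarrow> c/2 * (norm (z - p))\<^sup>2 + f' z \<le> c/2 * (norm (x - p))\<^sup>2 + f' x"
    by blast
  have "c *\<^sub>R (p - z) \<in> subdiff f z"
    by (rule prox_point_subgradient[OF nm cf z]) (use z_min in \<open>simp add: f'_def add.commute\<close>)
  moreover have "c *\<^sub>R (p - z) \<bullet> (p - z) \<ge> 0" using c by simp
  moreover have "dist z p < e"
  proof -
    have "c/2 * (norm (z - p))\<^sup>2 + f' z \<le> f' p" using z_min[OF p] by simp
    from prox_point_dist_sq_le[OF ab z c this]
    have "(norm (z - p))\<^sup>2 \<le> (4 * \<bar>M\<bar> + 4 * (norm a)\<^sup>2) / c" by (simp add: M_def)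
    also have "\<dots> < e\<^sup>2"
    proof -
      have "(4 * \<bar>M\<bar> + 4 * (norm a)\<^sup>2 + 1) / e\<^sup>2 \<le> c"
        unfolding c_def by (rule max.cobounded2)
      hence "4 * \<bar>M\<bar> + 4 * (norm a)\<^sup>2 < e\<^sup>2 * c"
        using e by (simp add: pos_divide_le_eq mult.commute)
      thus ?thesis using c by (simp add: pos_divide_less_eq)
    qed
    finally show ?thesis using e by (simp add: dist_norm power_less_imp_less_base)
  qed
  ultimately show thesis using that z by blast
qed

lemma strongly_convex_sg_subgradient_bound:
  fixes f :: "'a::real_inner \<Rightarrow> ereal"
  assumes st: "strongly_convex_sg f \<mu>" and \<mu>: "\<mu> \<ge> 0"
    and x: "x \<in> edom f" and y: "y \<in> edom f" and z: "z \<in> edom f" and g: "g \<in> subdiff f z"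
    and t: "0 \<le> t" "t \<le> 1" and g_nonneg: "g \<bullet> ((1 - t) *\<^sub>R x + t *\<^sub>R y - z) \<ge> 0"
  shows "real_of_ereal (f z) \<le> (1 - t) * real_of_ereal (f x) + t * real_of_ereal (f y)
           - \<mu>/2 * t * (1 - t) * (norm (x - y))\<^sup>2"
proof -
  define f' where "f' x = real_of_ereal (f x)" for x
  define p where "p = (1 - t) *\<^sub>R x + t *\<^sub>R y"
  have p_z: "p - z = (1 - t) *\<^sub>R (x - z) + t *\<^sub>R (y - z)"
    by (simp add: p_def algebra_simps)
  have "g \<bullet> (x - z) + \<mu>/2 * (norm (x - z))\<^sup>2 \<le> f' x - f' z"
    "g \<bullet> (y - z) + \<mu>/2 * (norm (y - z))\<^sup>2 \<le> f' y - f' z"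
    using st x y z g unfolding strongly_convex_sg_def f'_def by blast+
  hence "(1 - t) * (g \<bullet> (x - z) + \<mu>/2 * (norm (x - z))\<^sup>2) + t * (g \<bullet> (y - z) + \<mu>/2 * (norm (y - z))\<^sup>2)
      \<le> (1 - t) * (f' x - f' z) + t * (f' y - f' z)"
    using t by (intro add_mono mult_left_mono) auto
  also have "\<dots> = (1 - t) * f' x + t * f' y - f' z" by (simp add: algebra_simps)
  finally have "(1 - t) * (g \<bullet> (x - z) + \<mu>/2 * (norm (x - z))\<^sup>2) + t * (g \<bullet> (y - z) + \<mu>/2 * (norm (y - z))\<^sup>2)
      \<le> (1 - t) * f' x + t * f' y - f' z" .
  moreover have "(1 - t) * (g \<bullet> (x - z) + \<mu>/2 * (norm (x - z))\<^sup>2) + t * (g \<bullet> (y - z) + \<mu>/2 * (norm (y - z))\<^sup>2)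
      = (g \<bullet> (p - z) + \<mu>/2 * (norm (p - z))\<^sup>2) + \<mu>/2 * t * (1 - t) * (norm (x - y))\<^sup>2"
    unfolding p_z norm_convex_combination_sq by (simp add: inner_simps algebra_simps) (simp add: field_simps)
  moreover have "0 \<le> g \<bullet> (p - z) + \<mu>/2 * (norm (p - z))\<^sup>2"
    using g_nonneg \<mu> by (simp add: p_def)
  ultimately have "f' z \<le> (1 - t) * f' x + t * f' y - \<mu>/2 * t * (1 - t) * (norm (x - y))\<^sup>2"
    by linarith
  thus ?thesis by (simp add: f'_def)
qed

text \<open>The required epigraph point is approximated by points carrying a subgradient, at which
  the subgradient form of strong convexity applies; the epigraph is closed.\<close>
lemma strongly_convex_sg_imp_strongly_convex_on:
  fixes f :: "'a::euclidean_space \<Rightarrow> ereal"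
  assumes pf: "proper_fun f" and cl: "closed_fun f" and cf: "convex_fun f"
    and st: "strongly_convex_sg f \<mu>" and \<mu>: "\<mu> \<ge> 0" and U: "convex U"
  shows "strongly_convex_on (U \<inter> edom f) \<mu> (\<lambda>x. real_of_ereal (f x))"
proof -
  have nm: "\<And>x. f x \<noteq> -\<infinity>" using pf by (simp add: proper_fun_def)
  note E = epigraph_real_eq[OF nm]
  have "convex (U \<inter> edom f)"
    using U convex_fun_combination[OF nm cf] by (auto simp: convex_alt)
  moreover have "real_of_ereal (f ((1 - t) *\<^sub>R x + t *\<^sub>R y))
      \<le> (1 - t) * real_of_ereal (f x) + t * real_of_ereal (f y) - \<mu>/2 * t * (1 - t) * (norm (x - y))\<^sup>2"
    if x: "x \<in> edom f" and y: "y \<in> edom f" and t: "0 \<le> t" "t \<le> 1" for x y t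
  proof -
    define p where "p = (1 - t) *\<^sub>R x + t *\<^sub>R y"
    define T where "T = (1 - t) * real_of_ereal (f x) + t * real_of_ereal (f y) - \<mu>/2 * t * (1 - t) * (norm (x - y))\<^sup>2"
    have p: "p \<in> edom f" using convex_fun_combination[OF nm cf x y t] by (simp add: p_def)
    have "(p, T) \<in> epigraph f"
    proof (rule closed_approachable[OF cl[unfolded closed_fun_def], THEN iffD1], intro allI impI)
      fix e :: real assume "e > 0"
      then obtain z g where z: "z \<in> edom f" "dist z p < e" "g \<in> subdiff f z" "g \<bullet> (p - z) \<ge> 0"
        using subgradient_points_dense[OF pf cl cf p] by blast
      have "real_of_ereal (f z) \<le> T"
        unfolding T_def by (rule strongly_convex_sg_subgradient_bound[OF st \<mu> x y z(1,3) t])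
          (use z(4) in \<open>simp add: p_def\<close>)
      hence "(z, T) \<in> epigraph f" using z(1) by (simp add: E)
      thus "\<exists>w\<in>epigraph f. dist w (p, T) < e"
        using z(2) by (intro bexI[of _ "(z, T)"]) (auto simp: dist_Pair_Pair)
    qed
    thus ?thesis by (simp add: E p_def T_def)
  qed
  ultimately show ?thesis by (auto simp: strongly_convex_on_def)
qed

section \<open>R-linear convergence of sequences\<close>

lemma two_step_contraction_geometric:
  fixes \<Psi> :: "nat \<Rightarrow> real"
  assumes \<rho>: "0 < \<rho>" "\<rho> \<le> 1" and \<Psi>0: "0 \<le> \<Psi> 0" and \<Psi>1: "\<Psi> 1 \<le> \<Psi> 0"
    and contraction: "\<And>k. \<Psi> (k + 2) \<le> \<rho> * \<Psi> k"
  shows "\<Psi> k \<le> \<Psi> 0 / sqrt \<rho> * sqrt \<rho> ^ k"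
proof (induction k rule: nat_induct2)
  case 0
  have "\<Psi> 0 * 1 \<le> \<Psi> 0 * (1 / sqrt \<rho>)"
    using \<rho> \<Psi>0 by (intro mult_left_mono) (auto simp: le_divide_eq)
  thus ?case by simp
next
  case 1
  thus ?case using \<Psi>1 \<rho> by simp
next
  case (step k)
  have "\<Psi> (k + 2) \<le> \<rho> * \<Psi> k" by (rule contraction)
  also have "\<dots> \<le> \<rho> * (\<Psi> 0 / sqrt \<rho> * sqrt \<rho> ^ k)" using step \<rho> by (intro mult_left_mono) auto
  also have "\<dots> = \<Psi> 0 / sqrt \<rho> * (sqrt \<rho> ^ 2 * sqrt \<rho> ^ k)" using \<rho> by simp
  also have "\<dots> = \<Psi> 0 / sqrt \<rho> * sqrt \<rho> ^ (k + 2)" by (simp only: power_add mult.commute)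
  finally show ?case .
qed

lemma R_linear_of_sq_le_geometric:
  fixes x :: "nat \<Rightarrow> real"
  assumes \<tau>: "0 < \<tau>" "\<tau> < 1" and sq_le: "\<And>k. (x k)\<^sup>2 \<le> C * \<tau> ^ k"
  shows "\<exists>C' \<sigma>. C' > 0 \<and> 0 < \<sigma> \<and> \<sigma> < 1 \<and> (\<forall>k. x k \<le> C' * \<sigma> ^ k)"
proof (intro exI conjI allI)
  have "(x 0)\<^sup>2 \<le> C" using sq_le[of 0] by simp
  hence C: "0 \<le> C" using zero_le_power2[of "x 0"] by linarith
  show "sqrt C + 1 > 0" using C by (simp add: add_nonneg_pos)
  show "0 < sqrt \<tau>" "sqrt \<tau> < 1" using \<tau> by auto
  fix k
  have "x k \<le> sqrt ((x k)\<^sup>2)" by simp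
  also have "\<dots> \<le> sqrt (C * \<tau> ^ k)" using sq_le by (rule real_sqrt_le_mono)
  also have "\<dots> = sqrt C * sqrt \<tau> ^ k" by (simp add: real_sqrt_mult real_sqrt_power)
  also have "\<dots> \<le> (sqrt C + 1) * sqrt \<tau> ^ k" using \<tau> by (intro mult_right_mono) auto
  finally show "x k \<le> (sqrt C + 1) * sqrt \<tau> ^ k" .
qed

section \<open>The composite problem\<close>

locale composite_problem =
  fixes U :: "'a::euclidean_space set" and \<xi>1 :: "'a \<Rightarrow> real" and G :: "'a \<Rightarrow> 'a"
    and \<xi>2 :: "'a \<Rightarrow> ereal" and \<mu> :: real
  assumes U_closed: "closed U" and U_convex: "convex U" and feasible: "U \<inter> edom \<xi>2 \<noteq> {}"
    and xi1_convex: "convex_on UNIV \<xi>1"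
    and xi1_grad: "\<And>x. (\<xi>1 has_derivative (\<lambda>h. G x \<bullet> h)) (at x)"
    and xi2_proper: "proper_fun \<xi>2" and xi2_closed: "closed_fun \<xi>2" and xi2_convex: "convex_fun \<xi>2"
    and mu_pos: "\<mu> > 0" and xi2_strong: "strongly_convex_sg \<xi>2 \<mu>"
begin

abbreviation objective :: "'a \<Rightarrow> ereal" where
  "objective x \<equiv> ereal (\<xi>1 x) + \<xi>2 x"

definition F :: "'a \<Rightarrow> real" where
  "F x = \<xi>1 x + real_of_ereal (\<xi>2 x)"

lemma xi2_not_minf: "\<xi>2 x \<noteq> -\<infinity>"
  using xi2_proper by (simp add: proper_fun_def)

lemma xi2_strongly_convex_on:
  "convex V \<Longrightarrow> strongly_convex_on (V \<inter> edom \<xi>2) \<mu> (\<lambda>x. real_of_ereal (\<xi>2 x))"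
  using strongly_convex_sg_imp_strongly_convex_on[OF xi2_proper xi2_closed xi2_convex xi2_strong] mu_pos
  by simp

lemma F_strongly_convex_on:
  assumes "convex V"
  shows "strongly_convex_on (V \<inter> edom \<xi>2) \<mu> F"
proof -
  note sc2 = xi2_strongly_convex_on[OF assms]
  hence "convex (V \<inter> edom \<xi>2)" by (simp add: strongly_convex_on_def)
  hence "strongly_convex_on (V \<inter> edom \<xi>2) 0 \<xi>1"
    using convex_on_subset[OF xi1_convex] by (intro convex_on_imp_strongly_convex_on_0) auto
  from strongly_convex_on_add[OF this sc2] show ?thesis by (simp add: F_def[abs_def])
qed

lemma argmin_objective_iff:
  "is_argmin_on U objective z \<longleftrightarrow> z \<in> U \<inter> edom \<xi>2 \<and> (\<forall>x\<in>U \<inter> edom \<xi>2. F z \<le> F x)"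
  using is_argmin_on_ereal_add_iff[OF xi2_not_minf feasible] by (simp add: F_def)

text \<open>An affine minorant of \<open>\<xi>2\<close>, the gradient inequality for \<open>\<xi>1\<close> and strong
  convexity give the objective quadratic growth up to an affine term.\<close>
lemma minimizer_exists: "\<exists>z. is_argmin_on U objective z"
proof -
  obtain x0 where x0: "x0 \<in> U \<inter> edom \<xi>2" using feasible by blast
  obtain a b where ab: "\<And>x. x \<in> edom \<xi>2 \<Longrightarrow> b + a \<bullet> x \<le> real_of_ereal (\<xi>2 x)"
    using closed_convex_fun_affine_minorant[OF xi2_proper xi2_closed xi2_convex] by blast
  define a' where "a' = a + G x0"
  define b' where "b' = b + \<xi>1 x0 - G x0 \<bullet> x0"
  have affine: "b' + a' \<bullet> x \<le> F x" if "x \<in> UNIV \<inter> edom \<xi>2" for x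
    using ab[of x] convex_on_gradient_inequality[OF xi1_convex xi1_grad, of x0 x] that
    by (simp add: F_def a'_def b'_def inner_simps)
  have growth: "(\<mu>/2)/2 * (norm (x - x0))\<^sup>2 + a' \<bullet> x + (2 * b' + a' \<bullet> x0 - F x0)
      \<le> \<xi>1 x + real_of_ereal (\<xi>2 x)" if "x \<in> edom \<xi>2" for x
    using strongly_convex_on_quadratic_minorant[OF F_strongly_convex_on[OF convex_UNIV] _ affine, of x0 x]
      x0 that by (simp add: F_def)
  have "\<exists>z\<in>U \<inter> edom \<xi>2. \<forall>x\<in>U \<inter> edom \<xi>2.
      \<xi>1 z + real_of_ereal (\<xi>2 z) \<le> \<xi>1 x + real_of_ereal (\<xi>2 x)"
    by (rule closed_fun_quadratic_growth_min_exists[OF xi2_not_minf xi2_closed U_closed _ x0 _ growth])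
      (use mu_pos has_derivative_continuous[OF xi1_grad] in auto)
  thus ?thesis by (auto simp: argmin_objective_iff F_def)
qed

lemma objective_quadratic_growth:
  assumes "is_argmin_on U objective us" and "x \<in> U \<inter> edom \<xi>2"
  shows "\<mu>/2 * (norm (x - us))\<^sup>2 \<le> F x - F us"
  using strongly_convex_on_min_growth[OF F_strongly_convex_on[OF U_convex]] assms
  by (auto simp: argmin_objective_iff)

lemma minimizer_unique:
  assumes "is_argmin_on U objective z" and "is_argmin_on U objective z'"
  shows "z = z'"
proof -
  have "F z = F z'" using assms by (force simp: argmin_objective_iff)
  with objective_quadratic_growth[OF assms(2)] assms(1) mu_pos have "(norm (z - z'))\<^sup>2 \<le> 0"
    by (force simp: argmin_objective_iff mult_le_0_iff)
  thus ?thesis by simp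
qed

text \<open>The model is \<open>(Lk + \<mu>)\<close>-strongly convex: combine quadratic growth at its minimiser
  \<open>z\<close> with the gradient inequality at \<open>x\<close> and the descent condition at \<open>z\<close>.\<close>
lemma prox_step_inequality:
  assumes z: "is_argmin_on U (prox_model \<xi>1 G \<xi>2 Lk y) z"
    and descent: "\<xi>1 z \<le> \<xi>1 y + G y \<bullet> (z - y) + Lk/2 * (norm (z - y))\<^sup>2"
    and x: "x \<in> U \<inter> edom \<xi>2"
  shows "z \<in> U \<inter> edom \<xi>2 \<and> F z + (Lk + \<mu>)/2 * (norm (x - z))\<^sup>2 \<le> F x + Lk/2 * (norm (x - y))\<^sup>2"
proof -
  define m where "m w = \<xi>1 y + G y \<bullet> (w - y) + Lk/2 * (norm (w - y))\<^sup>2 + real_of_ereal (\<xi>2 w)" for w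
  have "is_argmin_on U (\<lambda>w. ereal (\<xi>1 y + G y \<bullet> (w - y) + Lk/2 * (norm (w - y))\<^sup>2) + \<xi>2 w) z"
    using z by (simp add: prox_model_def[abs_def])
  hence z_min: "z \<in> U \<inter> edom \<xi>2" "\<And>w. w \<in> U \<inter> edom \<xi>2 \<Longrightarrow> m z \<le> m w"
    by (simp_all add: is_argmin_on_ereal_add_iff[OF xi2_not_minf feasible] m_def)
  note sc2 = xi2_strongly_convex_on[OF U_convex]
  have "strongly_convex_on (U \<inter> edom \<xi>2) (Lk + \<mu>) m"
    using strongly_convex_on_add[OF strongly_convex_on_prox_quadratic sc2] sc2
    by (simp add: m_def[abs_def] strongly_convex_on_def)
  from strongly_convex_on_min_growth[OF this z_min x]
  have "(Lk + \<mu>)/2 * (norm (x - z))\<^sup>2 \<le> m x - m z" .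
  moreover have "m x \<le> F x + Lk/2 * (norm (x - y))\<^sup>2"
    using convex_on_gradient_inequality[OF xi1_convex xi1_grad, of y x] by (simp add: m_def F_def)
  moreover have "F z \<le> m z" using descent by (simp add: m_def F_def)
  ultimately show ?thesis using z_min(1) by simp
qed

end

section \<open>The restarted accelerated proximal gradient method\<close>

lemma restart_step:
  fixes L \<omega> :: "nat \<Rightarrow> real" and u v uh :: "nat \<Rightarrow> 'a::real_normed_vector"
    and \<Phi> :: "'a \<Rightarrow> 'b::linorder"
  assumes L_pos: "0 < L k" "0 < L (k - 1)"
    and \<omega>: "0 \<le> \<omega> (k - 1) \<and> \<omega> (k - 1) \<le> sqrt (L (k - 1) / L k)"
    and first_try: "is_argmin_on U (model (L k) (u (k - 1) + \<omega> (k - 1) *\<^sub>R (u (k - 1) - u (k - 2)))) (v k)"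
    and accept: "\<Phi> (v k) \<le> \<Phi> (u (k - 1)) \<Longrightarrow>
        u k = v k \<and> uh k = u (k - 1) + \<omega> (k - 1) *\<^sub>R (u (k - 1) - u (k - 2))"
    and restart: "\<Phi> (v k) > \<Phi> (u (k - 1)) \<Longrightarrow>
        uh k = u (k - 1) \<and> is_argmin_on U (model (L k) (u (k - 1))) (u k)"
  shows "is_argmin_on U (model (L k) (uh k)) (u k)
    \<and> L k * (norm (uh k - u (k - 1)))\<^sup>2 \<le> L (k - 1) * (norm (u (k - 1) - u (k - 2)))\<^sup>2"
proof (cases "\<Phi> (v k) \<le> \<Phi> (u (k - 1))")
  case True
  with accept have u: "u k = v k" and uh: "uh k = u (k - 1) + \<omega> (k - 1) *\<^sub>R (u (k - 1) - u (k - 2))"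
    by auto
  have "(\<omega> (k - 1))\<^sup>2 \<le> (sqrt (L (k - 1) / L k))\<^sup>2" using \<omega> by (intro power_mono) auto
  hence "L k * (\<omega> (k - 1))\<^sup>2 \<le> L (k - 1)" using L_pos by (simp add: field_simps)
  hence "L k * (\<omega> (k - 1))\<^sup>2 * (norm (u (k - 1) - u (k - 2)))\<^sup>2 \<le> L (k - 1) * (norm (u (k - 1) - u (k - 2)))\<^sup>2"
    by (intro mult_right_mono) auto
  thus ?thesis using first_try u uh by (simp add: power_mult_distrib mult.assoc)
next
  case False
  with restart have "uh k = u (k - 1)" "is_argmin_on U (model (L k) (u (k - 1))) (u k)" by auto
  thus ?thesis using L_pos by simp
qed

locale restarted_prox_gradient = composite_problem +
  fixes Lmax :: real and L :: "nat \<Rightarrow> real" and u uh :: "nat \<Rightarrow> 'a"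
  assumes L_pos: "\<And>k. 0 < L k" and L_le: "\<And>k. L k \<le> Lmax"
    and u0: "u 0 \<in> U \<inter> edom \<xi>2"
    and prox_step: "\<And>k. k \<ge> 1 \<Longrightarrow> is_argmin_on U (prox_model \<xi>1 G \<xi>2 (L k) (uh k)) (u k)"
    and extrapolation: "\<And>k. k \<ge> 1 \<Longrightarrow>
        L k * (norm (uh k - u (k - 1)))\<^sup>2 \<le> L (k - 1) * (norm (u (k - 1) - u (k - 2)))\<^sup>2"
    and descent: "\<And>k. k \<ge> 1 \<Longrightarrow>
        \<xi>1 (u k) \<le> \<xi>1 (uh k) + G (uh k) \<bullet> (u k - uh k) + L k / 2 * (norm (u k - uh k))\<^sup>2"
begin

lemma iterate_step_inequality:
  assumes "k \<ge> 1" and "x \<in> U \<inter> edom \<xi>2"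
  shows "u k \<in> U \<inter> edom \<xi>2 \<and>
    F (u k) + (L k + \<mu>)/2 * (norm (x - u k))\<^sup>2 \<le> F x + L k / 2 * (norm (x - uh k))\<^sup>2"
  using prox_step_inequality[OF prox_step descent] assms by blast

lemma iterate_feasible: "u k \<in> U \<inter> edom \<xi>2"
  using u0 iterate_step_inequality[of k "u 0"] by (cases "k = 0") auto

text \<open>For \<open>k = 0\<close> the truncated subtraction makes the kinetic term vanish.\<close>
definition lyapunov :: "'a \<Rightarrow> nat \<Rightarrow> real" where
  "lyapunov us k = F (u k) - F us + L k / 2 * (norm (u k - u (k - 1)))\<^sup>2"

context
  fixes us assumes us: "is_argmin_on U objective us"
begin

lemma lyapunov_ge_dist: "\<mu>/2 * (norm (u k - us))\<^sup>2 \<le> lyapunov us k"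
  using objective_quadratic_growth[OF us iterate_feasible] L_pos[of k]
  by (simp add: lyapunov_def add_increasing2)

lemma lyapunov_decrease: "lyapunov us k + \<mu>/2 * (norm (u k - u (k - 1)))\<^sup>2 \<le> lyapunov us (k - 1)"
proof (cases "k = 0")
  case False
  hence k: "k \<ge> 1" by simp
  have "F (u k) + (L k + \<mu>)/2 * (norm (u k - u (k - 1)))\<^sup>2 \<le> F (u (k - 1)) + L k / 2 * (norm (uh k - u (k - 1)))\<^sup>2"
    using iterate_step_inequality[OF k iterate_feasible[of "k - 1"]] by (simp add: norm_minus_commute)
  moreover have "u (k - 1 - 1) = u (k - 2)" by (simp add: numeral_2_eq_2)
  ultimately show ?thesis
    using extrapolation[OF k] by (simp add: lyapunov_def field_simps)
qed (simp add: lyapunov_def)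

text \<open>The \<open>\<mu>\<close>-term of the step inequality at \<open>us\<close> absorbs the cross term, by Young's
  inequality.\<close>
lemma objective_gap_le:
  assumes k: "k \<ge> 1"
  shows "F (u k) - F us \<le> L k * (L k / \<mu> + 1) / 2 * (norm (u k - uh k))\<^sup>2"
proof -
  define a w where "a = us - u k" and "w = u k - uh k"
  have "F (u k) + (L k + \<mu>)/2 * (norm a)\<^sup>2 \<le> F us + L k / 2 * (norm (a + w))\<^sup>2"
    using iterate_step_inequality[OF k] us by (simp add: argmin_objective_iff a_def w_def)
  moreover have "L k / 2 * (norm (a + w))\<^sup>2 = L k / 2 * (norm a)\<^sup>2 + a \<bullet> (L k *\<^sub>R w) + L k / 2 * (norm w)\<^sup>2"
    by (simp add: norm_add_sq algebra_simps)
  moreover have "(L k + \<mu>)/2 * (norm a)\<^sup>2 = L k / 2 * (norm a)\<^sup>2 + \<mu>/2 * (norm a)\<^sup>2"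
    by (simp add: algebra_simps add_divide_distrib)
  ultimately have "F (u k) - F us \<le> a \<bullet> (L k *\<^sub>R w) + L k / 2 * (norm w)\<^sup>2 - \<mu>/2 * (norm a)\<^sup>2"
    by linarith
  also have "a \<bullet> (L k *\<^sub>R w) \<le> \<mu>/2 * (norm a)\<^sup>2 + 1/(2*\<mu>) * (norm (L k *\<^sub>R w))\<^sup>2"
    using inner_le_Young[OF mu_pos] .
  also have "1/(2*\<mu>) * (norm (L k *\<^sub>R w))\<^sup>2 = L k * (L k / \<mu>) / 2 * (norm w)\<^sup>2"
    using L_pos[of k] mu_pos by (simp add: power_mult_distrib power2_eq_square field_simps)
  finally show ?thesis by (simp add: w_def algebra_simps)
qed

lemma lyapunov_le_steps:
  assumes k: "k \<ge> 1"
  shows "lyapunov us k \<le> (Lmax * (Lmax / \<mu> + 1) + Lmax / 2)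
    * ((norm (u k - u (k - 1)))\<^sup>2 + (norm (u (k - 1) - u (k - 2)))\<^sup>2)"
proof -
  define d1 d2 e where "d1 = (norm (u k - u (k - 1)))\<^sup>2" and "d2 = (norm (u (k - 1) - u (k - 2)))\<^sup>2"
    and "e = (norm (uh k - u (k - 1)))\<^sup>2"
  have L: "0 < L k" "L k \<le> Lmax" "0 \<le> L (k - 1)" "L (k - 1) \<le> Lmax" using L_pos L_le less_imp_le by auto
  have "(norm (u k - uh k))\<^sup>2 \<le> 2 * d1 + 2 * e"
    using norm_diff_sq_le[of "u k - u (k - 1)" "uh k - u (k - 1)"] by (simp add: d1_def e_def)
  hence "L k * (L k / \<mu> + 1) / 2 * (norm (u k - uh k))\<^sup>2 \<le> L k * (L k / \<mu> + 1) / 2 * (2 * d1 + 2 * e)"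
    using L mu_pos by (intro mult_left_mono) auto
  also have "\<dots> = (L k / \<mu> + 1) * (L k * d1 + L k * e)" by (simp add: algebra_simps)
  finally have "F (u k) - F us \<le> (L k / \<mu> + 1) * (L k * d1 + L k * e)"
    using objective_gap_le[OF k] by linarith
  also have "\<dots> \<le> (Lmax / \<mu> + 1) * (Lmax * d1 + Lmax * d2)"
  proof (rule mult_mono)
    have "L k * e \<le> Lmax * d2"
      using extrapolation[OF k] mult_right_mono[OF L(4), of d2] by (simp add: e_def d2_def)
    moreover have "L k * d1 \<le> Lmax * d1" using L by (simp add: d1_def mult_right_mono)
    ultimately show "L k * d1 + L k * e \<le> Lmax * d1 + Lmax * d2" by simp
  qed (use L mu_pos in \<open>auto simp: divide_right_mono d1_def e_def\<close>)
  finally have gap: "F (u k) - F us \<le> (Lmax / \<mu> + 1) * (Lmax * d1 + Lmax * d2)" .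
  have "L k / 2 * d1 \<le> Lmax / 2 * (d1 + d2)"
    using L by (intro mult_mono) (auto simp: d1_def d2_def)
  with gap have "lyapunov us k \<le> (Lmax / \<mu> + 1) * (Lmax * d1 + Lmax * d2) + Lmax / 2 * (d1 + d2)"
    by (simp add: lyapunov_def d1_def)
  also have "\<dots> = (Lmax * (Lmax / \<mu> + 1) + Lmax / 2) * (d1 + d2)"
    using mu_pos by (simp add: field_simps)
  finally show ?thesis by (simp add: d1_def d2_def)
qed

lemma lyapunov_two_step_contraction:
  obtains \<rho> where "0 < \<rho>" "\<rho> < 1" "\<And>k. lyapunov us (k + 2) \<le> \<rho> * lyapunov us k"
proof -
  define A where "A = Lmax * (Lmax / \<mu> + 1) + Lmax / 2"
  define B where "B = 2 / \<mu> * A"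
  have "0 < Lmax" using L_pos[of 0] L_le[of 0] by linarith
  hence A: "0 < A" using mu_pos by (simp add: A_def add_pos_pos)
  hence B: "0 < B" using mu_pos by (simp add: B_def)
  show thesis
  proof (rule that)
    show "0 < B / (1 + B)" "B / (1 + B) < 1" using B by auto
    fix k
    have "(norm (u (k + 2) - u (k + 1)))\<^sup>2 \<le> 2 / \<mu> * (lyapunov us (k + 1) - lyapunov us (k + 2))"
      "(norm (u (k + 1) - u k))\<^sup>2 \<le> 2 / \<mu> * (lyapunov us k - lyapunov us (k + 1))"
      using lyapunov_decrease[of "k + 2"] lyapunov_decrease[of "k + 1"] mu_pos
      by (simp_all add: numeral_2_eq_2 field_simps)
    hence "(norm (u (k + 2) - u (k + 1)))\<^sup>2 + (norm (u (k + 1) - u k))\<^sup>2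
        \<le> 2 / \<mu> * (lyapunov us k - lyapunov us (k + 2))"
      by (simp add: algebra_simps)
    hence "A * ((norm (u (k + 2) - u (k + 1)))\<^sup>2 + (norm (u (k + 1) - u k))\<^sup>2)
        \<le> A * (2 / \<mu> * (lyapunov us k - lyapunov us (k + 2)))"
      using A by (intro mult_left_mono) auto
    moreover have "lyapunov us (k + 2) \<le> A * ((norm (u (k + 2) - u (k + 1)))\<^sup>2 + (norm (u (k + 1) - u k))\<^sup>2)"
      using lyapunov_le_steps[of "k + 2"] by (simp add: A_def numeral_2_eq_2)
    ultimately have "lyapunov us (k + 2) \<le> B * (lyapunov us k - lyapunov us (k + 2))"
      by (simp add: B_def mult_ac)
    thus "lyapunov us (k + 2) \<le> B / (1 + B) * lyapunov us k"
      using B by (simp add: field_simps)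
  qed
qed

lemma R_linear_convergence:
  "\<exists>C \<tau>. C > 0 \<and> 0 < \<tau> \<and> \<tau> < 1 \<and> (\<forall>k. norm (u k - us) \<le> C * \<tau> ^ k)"
proof -
  obtain \<rho> where \<rho>: "0 < \<rho>" "\<rho> < 1" and contraction: "\<And>k. lyapunov us (k + 2) \<le> \<rho> * lyapunov us k"
    using lyapunov_two_step_contraction by blast
  have lyap_nonneg: "0 \<le> lyapunov us k" for k
    by (rule order_trans[OF _ lyapunov_ge_dist]) (use mu_pos in simp)
  have "lyapunov us 1 + \<mu>/2 * (norm (u 1 - u 0))\<^sup>2 \<le> lyapunov us 0"
    using lyapunov_decrease[of 1] by simp
  moreover have "0 \<le> \<mu>/2 * (norm (u 1 - u 0))\<^sup>2" using mu_pos by simp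
  ultimately have "lyapunov us 1 \<le> lyapunov us 0" by linarith
  hence "lyapunov us k \<le> lyapunov us 0 / sqrt \<rho> * sqrt \<rho> ^ k" for k
    using lyap_nonneg[of 0] \<rho> contraction by (intro two_step_contraction_geometric) auto
  hence dist_le: "\<mu>/2 * (norm (u k - us))\<^sup>2 \<le> lyapunov us 0 / sqrt \<rho> * sqrt \<rho> ^ k" for k
    using lyapunov_ge_dist[of k] by (rule order_trans[rotated])
  have "(norm (u k - us))\<^sup>2 \<le> (2 / \<mu> * (lyapunov us 0 / sqrt \<rho>)) * sqrt \<rho> ^ k" for k
    using dist_le[of k] mu_pos \<rho> by (simp add: field_simps)
  from R_linear_of_sq_le_geometric[where \<tau> = "sqrt \<rho>", OF _ _ this] \<rho> show ?thesis by auto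
qed

end

end

theorem theorem1:
  fixes U :: "(real^'m) set"
    and \<xi>1 :: "real^'m \<Rightarrow> real" and G :: "real^'m \<Rightarrow> real^'m"
    and \<xi>2 :: "real^'m \<Rightarrow> ereal"
    and Lip \<mu> :: real
    and L \<omega> :: "nat \<Rightarrow> real"
    and u v uh :: "nat \<Rightarrow> real^'m"
  assumes U_ne: "U \<noteq> {}" and U_closed: "closed U" and U_convex: "convex U"
    and xi1_convex: "convex_on UNIV \<xi>1"
    and xi1_grad: "\<And>x. (\<xi>1 has_derivative (\<lambda>h. G x \<bullet> h)) (at x)"
    and Lip_pos: "Lip > 0"
    and G_Lip: "\<And>x y. norm (G x - G y) \<le> Lip * norm (x - y)"
    and xi2_proper: "proper_fun \<xi>2" and xi2_closed: "closed_fun \<xi>2"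
    and xi2_convex: "convex_fun \<xi>2"
    and mu_pos: "\<mu> > 0" and xi2_strong: "strongly_convex_sg \<xi>2 \<mu>"
    and u0: "u 0 \<in> U \<inter> edom \<xi>2"
    and L_range: "\<And>k. 0 < L k \<and> L k \<le> Lip"
    and \<omega>_range: "\<And>k. k \<ge> 1 \<Longrightarrow> 0 \<le> \<omega> (k - 1) \<and> \<omega> (k - 1) \<le> sqrt (L (k - 1) / L k)"
    and first_try: "\<And>k. k \<ge> 1 \<Longrightarrow>
        is_argmin_on U (prox_model \<xi>1 G \<xi>2 (L k)
                         (u (k - 1) + \<omega> (k - 1) *\<^sub>R (u (k - 1) - u (k - 2)))) (v k)"
    and accept: "\<And>k. k \<ge> 1 \<Longrightarrow>
        ereal (\<xi>1 (v k)) + \<xi>2 (v k) \<le> ereal (\<xi>1 (u (k - 1))) + \<xi>2 (u (k - 1)) \<Longrightarrow>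
        u k = v k \<and> uh k = u (k - 1) + \<omega> (k - 1) *\<^sub>R (u (k - 1) - u (k - 2))"
    and restart: "\<And>k. k \<ge> 1 \<Longrightarrow>
        ereal (\<xi>1 (v k)) + \<xi>2 (v k) > ereal (\<xi>1 (u (k - 1))) + \<xi>2 (u (k - 1)) \<Longrightarrow>
        uh k = u (k - 1) \<and> is_argmin_on U (prox_model \<xi>1 G \<xi>2 (L k) (u (k - 1))) (u k)"
    and descent: "\<And>k. k \<ge> 1 \<Longrightarrow>
        \<xi>1 (u k) \<le> \<xi>1 (uh k) + G (uh k) \<bullet> (u k - uh k) + L k / 2 * (norm (u k - uh k))\<^sup>2"
  shows "\<exists>us. is_argmin_on U (\<lambda>x. ereal (\<xi>1 x) + \<xi>2 x) us
            \<and> (\<forall>z. is_argmin_on U (\<lambda>x. ereal (\<xi>1 x) + \<xi>2 x) z \<longrightarrow> z = us)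
            \<and> (\<exists>C \<tau>. C > 0 \<and> 0 < \<tau> \<and> \<tau> < 1 \<and> (\<forall>k. norm (u k - us) \<le> C * \<tau> ^ k))"
proof -
  interpret composite_problem U \<xi>1 G \<xi>2 \<mu>
    using U_closed U_convex u0 xi1_convex xi1_grad xi2_proper xi2_closed xi2_convex mu_pos xi2_strong
    by unfold_locales auto
  have step: "is_argmin_on U (prox_model \<xi>1 G \<xi>2 (L k) (uh k)) (u k)
      \<and> L k * (norm (uh k - u (k - 1)))\<^sup>2 \<le> L (k - 1) * (norm (u (k - 1) - u (k - 2)))\<^sup>2"
    if k: "k \<ge> 1" for k
    using restart_step[where \<Phi> = objective and model = "prox_model \<xi>1 G \<xi>2" and L = L
        and \<omega> = \<omega> and u = u and v = v and uh = uh and k = k,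
        OF _ _ \<omega>_range[OF k] first_try[OF k] accept[OF k] restart[OF k]] L_range by blast
  interpret restarted_prox_gradient U \<xi>1 G \<xi>2 \<mu> Lip L u uh
    using L_range u0 step descent by unfold_locales auto
  obtain us where us: "is_argmin_on U objective us" using minimizer_exists by blast
  show ?thesis using us minimizer_unique R_linear_convergence[OF us] by blast
qed

end
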